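(* Let $\gamma:\mathbb{Z}_{\ge1}\to\mathbb{R}$ be a function with $\gamma(m)\ge m$ for all integers $m\ge 1$. Let $\lambda\ge 6$ be an integer such that $\gamma(\lambda)\le \frac12\lambda\log_2\lambda-\frac14\lambda$, and let $r$ be an integer with $2^{\gamma(\lambda)}\le r\le 2^{2\gamma(\lambda)}(1+\lambda^2)$ such that $p=r^{2^\lambda}+1$ is prime. Let $s=\log_2 p$ and let $\lambda'$ be the smallest integer with $2^{\lambda'}\ge\log_2 s$. Then there exists a power of two $\beta\ge1$ such that $$2\beta\log_2 r+\lambda-\log_2\beta\le 2\,\gamma(\lambda')\,2^{\lambda'}.$$
   Context: $\log_2$ denotes the logarithm in base $2$. A power of two means an integer $2^k$ with $k\ge 0$. *)

theory Defs
  imports Complex_Main "HOL-Computational_Algebra.Primes"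
begin

end

theory Submission
  imports Defs
begin

text \<open>Write \<open>L = log\<^sub>2 \<lambda>\<close>. Since \<open>r \<ge> 2\<^sup>\<lambda>\<close>, we get
  \<open>log\<^sub>2 s \<ge> \<lambda> + log\<^sub>2 (log\<^sub>2 r) \<ge> \<lambda> + L\<close>, hence \<open>2\<^bsup>\<lambda>'\<^esup> \<ge> \<lambda> + L\<close> and \<open>\<lambda>' \<ge> L\<close>, so that
  \<open>2 \<gamma>(\<lambda>') 2\<^bsup>\<lambda>'\<^esup> \<ge> 2 L (\<lambda> + L)\<close>. On the other side the upper bound on \<open>r\<close> and the
  hypothesis on \<open>\<gamma>(\<lambda>)\<close> give \<open>2 log\<^sub>2 r + \<lambda> \<le> 2\<lambda>L + 2 log\<^sub>2 (1 + \<lambda>\<^sup>2) \<le> 2\<lambda>L + 2L\<^sup>2\<close>.\<close>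

lemma log2_one_plus_square_le:
  fixes x :: real
  assumes "x \<ge> 6"
  shows "log 2 (1 + x\<^sup>2) \<le> (log 2 x)\<^sup>2"
proof -
  define L where "L = log 2 x"
  have "(2::real) powr (5/2) = 4 * sqrt 2"
    using powr_add[of "2::real" 2 "1/2"] by (simp add: powr_half_sqrt)
  also have "\<dots> \<le> 6"
    using real_le_lsqrt[of "3/2" 2] by (simp add: power2_eq_square)
  finally have L_ge: "L \<ge> 5/2"
    unfolding L_def using assms le_log_iff[of 2 x "5/2"] by simp
  have "1 \<le> x\<^sup>2"
    using assms by (simp add: one_le_power)
  then have "log 2 (1 + x\<^sup>2) \<le> log 2 (2 * x\<^sup>2)"
    by (subst log_le_cancel_iff) auto
  also have "\<dots> = 1 + 2 * L"
    unfolding L_def using assms by (simp add: log_mult log_nat_power)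
  also have "\<dots> \<le> L\<^sup>2"
    using L_ge mult_right_mono[of "5/2" L L] unfolding power2_eq_square by linarith
  finally show ?thesis unfolding L_def .
qed

lemma le_two_powr_Least:
  fixes x :: real
  shows "x \<le> 2 powr real (LEAST k::nat. x \<le> 2 powr real k)"
proof (rule LeastI_ex)
  obtain k :: nat where "x \<le> real k"
    using real_arch_simple by blast
  also have "real k \<le> 2 powr real k"
    by (simp add: powr_realpow less_imp_le)
  finally show "\<exists>k::nat. x \<le> 2 powr real k" ..
qed

lemma log2_log2_power_two_power_ge:
  fixes r :: real and n :: nat
  assumes "n \<ge> 1" and "2 ^ n \<le> r"
  shows "real n + log 2 (real n) \<le> log 2 (log 2 (r ^ 2 ^ n + 1))"
proof -
  have r_pos: "r > 0"
    using assms(2) by (smt (verit) zero_less_power)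
  have "2 powr real n \<le> r"
    using assms(2) by (simp add: powr_realpow)
  with r_pos have "real n \<le> log 2 r"
    by (simp add: le_log_iff)
  then have "real n + log 2 (real n) \<le> real n + log 2 (log 2 r)"
    using assms(1) by simp
  also have "\<dots> = log 2 (log 2 (r ^ 2 ^ n))"
    using \<open>real n \<le> log 2 r\<close> assms(1) r_pos by (simp add: log_nat_power log_mult)
  also have "\<dots> \<le> log 2 (log 2 (r ^ 2 ^ n + 1))"
  proof -
    have "0 < log 2 r"
      using \<open>real n \<le> log 2 r\<close> assms(1) by linarith
    then have "0 < log 2 (r ^ 2 ^ n)"
      using r_pos by (simp add: log_nat_power)
    moreover have "log 2 (r ^ 2 ^ n) \<le> log 2 (r ^ 2 ^ n + 1)"
      using r_pos by (subst log_le_cancel_iff) (auto simp: add_pos_pos)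
    ultimately show ?thesis
      by (subst log_le_cancel_iff) auto
  qed
  finally show ?thesis .
qed

lemma two_log2_add_le_of_le_two_powr:
  fixes g r :: real and n :: nat
  assumes "n \<ge> 6"
    and "g \<le> real n * log 2 (real n) / 2 - real n / 4"
    and "0 < r" and "r \<le> 2 powr (2 * g) * (1 + real n ^ 2)"
  shows "2 * log 2 r + real n \<le> 2 * log 2 (real n) * (real n + log 2 (real n))"
proof -
  have "log 2 r \<le> log 2 (2 powr (2 * g) * (1 + real n ^ 2))"
    using assms(3,4) by simp
  also have "\<dots> = 2 * g + log 2 (1 + real n ^ 2)"
    using add_pos_nonneg[of 1 "real n ^ 2"] by (simp add: log_mult)
  finally show ?thesis
    using assms(2) log2_one_plus_square_le[of "real n"] assms(1)
    by (simp add: power2_eq_square algebra_simps)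
qed

lemma two_log2_mul_le_Least_two_powr:
  fixes \<gamma> :: "nat \<Rightarrow> real" and n :: nat and x :: real
  assumes "\<And>m. m \<ge> 1 \<Longrightarrow> \<gamma> m \<ge> real m"
    and "n \<ge> 2" and "real n + log 2 (real n) \<le> x"
  defines "k \<equiv> LEAST k::nat. x \<le> 2 powr real k"
  shows "2 * log 2 (real n) * (real n + log 2 (real n)) \<le> 2 * \<gamma> k * 2 ^ k"
proof -
  define L where "L = log 2 (real n)"
  have L_pos: "L > 0"
    unfolding L_def using assms(2) by simp
  have k_ge: "real n + L \<le> 2 powr real k"
    unfolding k_def L_def using assms(3) le_two_powr_Least order_trans by blast
  with L_pos have "real n \<le> 2 powr real k"
    by linarith
  then have L_le: "L \<le> real k"
    unfolding L_def using assms(2) by (simp add: log_le_iff)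
  with L_pos have "k \<ge> 1"
    by simp
  have "2 * L * (real n + L) \<le> 2 * real k * 2 powr real k"
    using L_le k_ge L_pos by (intro mult_mono) auto
  also have "\<dots> \<le> 2 * \<gamma> k * 2 ^ k"
    using assms(1)[OF \<open>k \<ge> 1\<close>] by (simp add: powr_realpow)
  finally show ?thesis
    unfolding L_def .
qed

theorem proposition5p1:
  fixes \<gamma> :: "nat \<Rightarrow> real" and lam :: nat and r :: int
  assumes gamma_ge: "\<And>m. m \<ge> 1 \<Longrightarrow> \<gamma> m \<ge> real m"
    and lam_ge: "lam \<ge> 6"
    and gamma_lam: "\<gamma> lam \<le> real lam * log 2 (real lam) / 2 - real lam / 4"
    and r_lo: "2 powr \<gamma> lam \<le> real_of_int r"
    and r_hi: "real_of_int r \<le> 2 powr (2 * \<gamma> lam) * (1 + real lam ^ 2)"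
    and p_prime: "prime (r ^ (2 ^ lam) + 1)"
  shows "let p = r ^ (2 ^ lam) + 1;
             s = log 2 (real_of_int p);
             lam' = (LEAST k::nat. 2 powr real k \<ge> log 2 s)
         in \<exists>\<beta>::nat. (\<exists>k::nat. \<beta> = 2 ^ k) \<and> \<beta> \<ge> 1 \<and>
              2 * real \<beta> * log 2 (real_of_int r) + real lam - log 2 (real \<beta>)
                \<le> 2 * \<gamma> lam' * 2 ^ lam'"
proof -
  define lam' where
    "lam' = (LEAST k::nat. log 2 (log 2 (real_of_int (r ^ 2 ^ lam + 1))) \<le> 2 powr real k)"
  have "2 powr real lam \<le> 2 powr \<gamma> lam"
    using gamma_ge lam_ge by simp
  with r_lo have r_ge: "2 ^ lam \<le> real_of_int r"
    using powr_realpow[of 2 lam] by linarith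
  then have "real_of_int r > 0"
    by (smt (verit) zero_less_power)
  then have "2 * log 2 (real_of_int r) + real lam
      \<le> 2 * log 2 (real lam) * (real lam + log 2 (real lam))"
    using two_log2_add_le_of_le_two_powr lam_ge gamma_lam r_hi by blast
  also have "\<dots> \<le> 2 * \<gamma> lam' * 2 ^ lam'"
    unfolding lam'_def using two_log2_mul_le_Least_two_powr[OF gamma_ge]
      log2_log2_power_two_power_ge[OF _ r_ge] lam_ge by simp
  finally show ?thesis
    unfolding Let_def lam'_def[symmetric]
    by (intro exI[of _ 1]) (auto intro: exI[of _ 0])
qed

end
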